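(* Let $\phi:\mathbb{N}_0\to\mathbb{N}_0$ satisfy $\phi(0)=0$ and $\phi(x)\neq x$ for all $x\in\mathbb{N}$, and let $n\ge 2$. Assume the local function $\phi_n$ has no cycle. Then: (1) $M_n(\phi)$ is nilpotent of degree at most $n$. (2) For every $k\ge1$ the power $M_n(\phi)^k$ is a binary ($\{0,1\}$-valued) matrix, $\#M_n(\phi)^k\le n-k$ for $1\le k\le n$, and $M_n(\phi)^k\cap M_n(\phi)^l=0$ for all $k\ne l$, $k,l\ge1$. (3) $\widehat{M}_n(\phi)$ is invertible and $\det\widehat{M}_n(\phi)=1$. (4) $\widehat{M}_n(\phi)^{-1}$ is a binary matrix with $\widehat{M}_n(\phi)^{-1}=I+M_n(\phi)+\cdots+M_n(\phi)^{n-1}$ and \[ \#\widehat{M}_n(\phi)^{-1}=n+\sum_{k=1}^{n-1}\#M_n(\phi)^k\le\binom{n+1}{2}. \]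
   Context: $\mathbb{N}=\{1,2,\dots\}$, $\mathbb{N}_0=\mathbb{N}\cup\{0\}$, $D_n=\{1,\dots,n\}$, $D_{n,0}=D_n\cup\{0\}$. The local function $\phi_n:D_{n,0}\to D_{n,0}$ is $\phi_n(x)=\phi(x)$ if $x\in D_n$ and $\phi(x)\in D_n$, and $\phi_n(x)=0$ otherwise. "$\phi_n$ has no cycle" means there are no $m\ge2$ and $x\in D_n$ with $\phi_n^m(x)=x$. For $1\le i\le n$, $\mathbf{e}_i$ is the $i$-th unit vector in $\mathbb{Z}^n$ and $\mathbf{e}_0$ is the zero vector. $M_n(\phi)$ is the $n\times n$ matrix whose $j$-th column is $\mathbf{e}_{\phi_n(j)}$, and $\widehat{M}_n(\phi)=I-M_n(\phi)$. For an $n\times n$ matrix $A$, $\#A$ is the number of nonzero entries of $A$ ($\#A^k$ means $\#(A^k)$). For $n\times n$ matrices $A,B$, $A\cap B$ denotes the number of index pairs $(i,j)$ with $A_{ij}B_{ij}\ne0$. A matrix $A$ is nilpotent of degree $k$ if $A^k=0$ and $A^{k-1}\neq 0$. *)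

theory Defs
  imports "Jordan_Normal_Form.Matrix" "Jordan_Normal_Form.Determinant"
begin

(* Matrices are Jordan_Normal_Form integer matrices; row/column indices are 0-based,
   so paper index i in D_n corresponds to matrix index i-1. *)

definition loc_fun :: "nat \<Rightarrow> (nat \<Rightarrow> nat) \<Rightarrow> nat \<Rightarrow> nat" where
  "loc_fun n \<phi> x = (if x \<in> {1..n} \<and> \<phi> x \<in> {1..n} then \<phi> x else 0)"

definition no_cycle :: "nat \<Rightarrow> (nat \<Rightarrow> nat) \<Rightarrow> bool" where
  "no_cycle n \<phi> \<longleftrightarrow> \<not> (\<exists>m\<ge>2. \<exists>x\<in>{1..n}. (loc_fun n \<phi> ^^ m) x = x)"

definition M_mat :: "nat \<Rightarrow> (nat \<Rightarrow> nat) \<Rightarrow> int mat" where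
  "M_mat n \<phi> = mat n n (\<lambda>(i, j). if loc_fun n \<phi> (j + 1) = i + 1 then 1 else 0)"

definition Mhat_mat :: "nat \<Rightarrow> (nat \<Rightarrow> nat) \<Rightarrow> int mat" where
  "Mhat_mat n \<phi> = 1\<^sub>m n - M_mat n \<phi>"

definition nnz :: "int mat \<Rightarrow> nat" where
  "nnz A = card {(i, j). i < dim_row A \<and> j < dim_col A \<and> A $$ (i, j) \<noteq> 0}"

definition mat_meet :: "int mat \<Rightarrow> int mat \<Rightarrow> nat" where
  "mat_meet A B = card {(i, j). i < dim_row A \<and> j < dim_col A \<and> A $$ (i, j) * B $$ (i, j) \<noteq> 0}"

definition binary_mat :: "int mat \<Rightarrow> bool" where
  "binary_mat A \<longleftrightarrow> (\<forall>i < dim_row A. \<forall>j < dim_col A. A $$ (i, j) \<in> {0, 1})"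

definition nilpotent_of_degree :: "int mat \<Rightarrow> nat \<Rightarrow> bool" where
  "nilpotent_of_degree A k \<longleftrightarrow>
     A ^\<^sub>m k = 0\<^sub>m (dim_row A) (dim_col A) \<and> A ^\<^sub>m (k - 1) \<noteq> 0\<^sub>m (dim_row A) (dim_col A)"

definition mat_sum :: "nat \<Rightarrow> (nat \<Rightarrow> int mat) \<Rightarrow> nat \<Rightarrow> int mat" where
  "mat_sum n A m = mat n n (\<lambda>(i, j). \<Sum>k<m. A k $$ (i, j))"

end

theory Submission
  imports Defs
begin

(* The local map f = phi_n fixes 0 and, having no cycles, never revisits a nonzero value along an
   orbit; so every orbit starting in {0..n} reaches 0 within n steps. M_n(phi)^k is the 0/1 matrix
   of f^k: it vanishes for k = n, distinct powers have disjoint supports, and column j of M^k is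
   nonzero iff the orbit of j+1 survives k steps without reaching 0. As long as some point survives
   k steps, some point survives k but not k + 1 steps, so at most n - k points survive k steps.
   Hence I - M has the inverse I + M + ... + M^(n-1), whose support is the disjoint union of the
   supports of the powers. In the Leibniz expansion of det (I - M) the term of a permutation p
   other than the identity vanishes: otherwise f would map p i + 1 to i + 1 at every point moved
   by p, and following p along its moved points would give a cycle of f. *)

lemma last_before_change:
  assumes "P k" "\<not> P m" "k \<le> m"
  shows "\<exists>j. k \<le> j \<and> j < m \<and> P j \<and> \<not> P (Suc j)"
  using assms
proof (induction m)
  case 0
  then show ?case by simp
next
  case (Suc m)
  show ?case
  proof (cases "P m")
    case True
    with Suc.prems show ?thesis by (intro exI[of _ m]) (auto simp: le_Suc_eq)
  next
    case False
    with Suc show ?thesis by (auto simp: le_Suc_eq intro: less_SucI)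
  qed
qed

lemma sum_eq_single_nonzero:
  assumes "finite K" "k0 \<in> K" "\<And>k. k \<in> K \<Longrightarrow> k \<noteq> k0 \<Longrightarrow> f k = 0"
  shows "sum f K = f k0"
proof -
  have "sum f K = f k0 + sum f (K - {k0})" using assms(1,2) by (rule sum.remove)
  also have "sum f (K - {k0}) = 0" using assms(3) by (intro sum.neutral) auto
  finally show ?thesis by simp
qed

lemma funpow_diff_apply: "k \<le> l \<Longrightarrow> (f ^^ l) x = (f ^^ (l - k)) ((f ^^ k) x)"
  by (metis comp_apply funpow_add le_add_diff_inverse2)

lemma sum_lessThan_split_first: "0 < (n :: nat) \<Longrightarrow> (\<Sum>k<n. g k) = g 0 + (\<Sum>k=1..n-1. g k)"
  by (cases n) (simp_all add: sum.lessThan_Suc_shift sum.atLeast1_atMost_eq del: sum.lessThan_Suc)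

lemma sum_diff_lessThan_eq_choose_2: "(\<Sum>k<n. n - k) = Suc n choose 2"
proof (induction n)
  case 0
  then show ?case by simp
next
  case (Suc n)
  have "(\<Sum>k<Suc n. Suc n - k) = (\<Sum>k<n. (n - k) + 1) + 1"
    by (simp add: Suc_diff_le)
  also have "\<dots> = (\<Sum>k<n. n - k) + n + 1" by (simp only: sum.distrib) simp
  also have "\<dots> = (Suc n choose 2) + Suc n" by (simp add: Suc.IH)
  also have "\<dots> = Suc (Suc n) choose 2"
    using binomial_Suc_Suc[of "Suc n" 1] by (simp add: numeral_2_eq_2 del: binomial_Suc_Suc)
  finally show ?case .
qed

definition mat_support :: "'a :: zero mat \<Rightarrow> (nat \<times> nat) set" where
  "mat_support A = {(i, j). i < dim_row A \<and> j < dim_col A \<and> A $$ (i, j) \<noteq> 0}"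

lemma finite_mat_support[simp]: "finite (mat_support A)"
proof -
  have "mat_support A \<subseteq> {..<dim_row A} \<times> {..<dim_col A}" by (auto simp: mat_support_def)
  then show ?thesis by (rule finite_subset) simp
qed

lemma nnz_eq_card_mat_support: "nnz A = card (mat_support A)"
  by (simp add: nnz_def mat_support_def)

lemma mat_meet_eq_card_Int:
  assumes "dim_row B = dim_row A" "dim_col B = dim_col A"
  shows "mat_meet A B = card (mat_support A \<inter> mat_support B)"
  unfolding mat_meet_def mat_support_def using assms by (intro arg_cong[where f = card]) auto

lemma pow_mat_Suc_left:
  assumes "A \<in> carrier_mat n n"
  shows "A ^\<^sub>m Suc k = A * A ^\<^sub>m k"
proof (induction k)
  case 0
  show ?case using assms by simp
next
  case (Suc k)
  have "A ^\<^sub>m Suc (Suc k) = A ^\<^sub>m Suc k * A" by (rule pow_mat.simps(2))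
  also have "\<dots> = (A * A ^\<^sub>m k) * A" by (simp only: Suc.IH)
  also have "\<dots> = A * (A ^\<^sub>m k * A)" using assms by (intro assoc_mult_mat) auto
  finally show ?case by simp
qed

lemma nilpotent_of_degree_exists:
  assumes A: "A \<in> carrier_mat n n" and "n > 0" and "A ^\<^sub>m m = 0\<^sub>m n n"
  shows "\<exists>k \<le> m. k \<ge> 1 \<and> nilpotent_of_degree A k"
proof -
  have "A ^\<^sub>m 0 \<noteq> 0\<^sub>m n n"
    using A \<open>n > 0\<close> by (auto simp: mat_eq_iff)
  then obtain j where "j < m" "A ^\<^sub>m j \<noteq> 0\<^sub>m n n" "A ^\<^sub>m Suc j = 0\<^sub>m n n"
    using last_before_change[of "\<lambda>k. A ^\<^sub>m k \<noteq> 0\<^sub>m n n" 0 m] assms(3) by auto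
  then show ?thesis
    using A by (intro exI[of _ "Suc j"]) (auto simp: nilpotent_of_degree_def)
qed

lemma det_eq_diag_prod:
  assumes A: "A \<in> carrier_mat n n"
    and off_diag: "\<And>p. p permutes {0..<n} \<Longrightarrow> p \<noteq> id \<Longrightarrow> (\<Prod>i=0..<n. A $$ (i, p i)) = 0"
  shows "det A = (\<Prod>i=0..<n. A $$ (i, i))"
proof -
  have "det A = (\<Sum>p \<in> {p. p permutes {0..<n}}. signof p * (\<Prod>i=0..<n. A $$ (i, p i)))"
    by (rule det_def'[OF A])
  also have "\<dots> = signof id * (\<Prod>i=0..<n. A $$ (i, id i))"
    by (rule sum_eq_single_nonzero) (auto simp: permutes_id off_diag finite_permutations)
  finally show ?thesis by (simp add: signof_id)
qed

lemma mat_sum_carrier[simp]: "mat_sum n B m \<in> carrier_mat n n"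
  by (simp add: mat_sum_def)

lemma dim_mat_sum[simp]: "dim_row (mat_sum n B m) = n" "dim_col (mat_sum n B m) = n"
  by (simp_all add: mat_sum_def)

lemma mat_sum_0: "mat_sum n B 0 = 0\<^sub>m n n"
  by (auto simp: mat_sum_def)

lemma mat_sum_Suc:
  assumes "B m \<in> carrier_mat n n"
  shows "mat_sum n B (Suc m) = mat_sum n B m + B m"
  using assms by (auto simp: mat_sum_def)

lemma geometric_mat_sum_left:
  assumes A: "A \<in> carrier_mat n n"
  shows "(1\<^sub>m n - A) * mat_sum n (\<lambda>k. A ^\<^sub>m k) m = 1\<^sub>m n - A ^\<^sub>m m"
proof (induction m)
  case 0
  show ?case using A by (auto simp: mat_sum_0)
next
  case (Suc m)
  have "(1\<^sub>m n - A) * mat_sum n (\<lambda>k. A ^\<^sub>m k) (Suc m)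
      = (1\<^sub>m n - A) * (mat_sum n (\<lambda>k. A ^\<^sub>m k) m + A ^\<^sub>m m)"
    using A by (simp add: mat_sum_Suc)
  also have "\<dots> = (1\<^sub>m n - A) * mat_sum n (\<lambda>k. A ^\<^sub>m k) m + (1\<^sub>m n - A) * A ^\<^sub>m m"
    by (rule mult_add_distrib_mat[OF minus_carrier_mat[OF A] mat_sum_carrier pow_carrier_mat[OF A]])
  also have "(1\<^sub>m n - A) * A ^\<^sub>m m = A ^\<^sub>m m - A ^\<^sub>m Suc m"
    using minus_mult_distrib_mat[OF one_carrier_mat A pow_carrier_mat[OF A]] A
    by (simp add: pow_mat_Suc_left[OF A, symmetric])
  finally show ?case using A by (simp add: Suc.IH) (auto simp: mat_eq_iff)
qed

lemma geometric_mat_sum_right: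
  assumes A: "A \<in> carrier_mat n n"
  shows "mat_sum n (\<lambda>k. A ^\<^sub>m k) m * (1\<^sub>m n - A) = 1\<^sub>m n - A ^\<^sub>m m"
proof (induction m)
  case 0
  show ?case using A by (auto simp: mat_sum_0)
next
  case (Suc m)
  have "mat_sum n (\<lambda>k. A ^\<^sub>m k) (Suc m) * (1\<^sub>m n - A)
      = (mat_sum n (\<lambda>k. A ^\<^sub>m k) m + A ^\<^sub>m m) * (1\<^sub>m n - A)"
    using A by (simp add: mat_sum_Suc)
  also have "\<dots> = mat_sum n (\<lambda>k. A ^\<^sub>m k) m * (1\<^sub>m n - A) + A ^\<^sub>m m * (1\<^sub>m n - A)"
    by (rule add_mult_distrib_mat[OF mat_sum_carrier pow_carrier_mat[OF A] minus_carrier_mat[OF A]])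
  also have "A ^\<^sub>m m * (1\<^sub>m n - A) = A ^\<^sub>m m - A ^\<^sub>m Suc m"
    using mult_minus_distrib_mat[OF pow_carrier_mat[OF A] one_carrier_mat A] A by simp
  finally show ?case using A by (simp add: Suc.IH) (auto simp: mat_eq_iff)
qed

lemma mat_sum_entry_single:
  assumes B: "\<And>k. k < m \<Longrightarrow> B k \<in> carrier_mat n n"
    and disj: "\<And>k l. k < m \<Longrightarrow> l < m \<Longrightarrow> k \<noteq> l \<Longrightarrow> mat_support (B k) \<inter> mat_support (B l) = {}"
    and ij: "i < n" "j < n" and k0: "k0 < m" "B k0 $$ (i, j) \<noteq> 0"
  shows "mat_sum n B m $$ (i, j) = B k0 $$ (i, j)"
proof -
  have "B k $$ (i, j) = 0" if "k < m" "k \<noteq> k0" for k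
    using disj[OF that(1) k0(1) that(2)] B[OF that(1)] B[OF k0(1)] ij k0(2)
    by (auto simp: mat_support_def)
  then have "(\<Sum>k<m. B k $$ (i, j)) = B k0 $$ (i, j)"
    using k0(1) by (intro sum_eq_single_nonzero) auto
  then show ?thesis using ij by (simp add: mat_sum_def)
qed

lemma mat_support_mat_sum:
  assumes B: "\<And>k. k < m \<Longrightarrow> B k \<in> carrier_mat n n"
    and disj: "\<And>k l. k < m \<Longrightarrow> l < m \<Longrightarrow> k \<noteq> l \<Longrightarrow> mat_support (B k) \<inter> mat_support (B l) = {}"
  shows "mat_support (mat_sum n B m) = (\<Union>k<m. mat_support (B k))"
proof (intro equalityI subsetI)
  fix p assume "p \<in> mat_support (mat_sum n B m)"
  then obtain i j where p: "p = (i, j)" "i < n" "j < n" "(\<Sum>k<m. B k $$ (i, j)) \<noteq> 0"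
    by (auto simp: mat_support_def mat_sum_def)
  then obtain k where "k < m" "B k $$ (i, j) \<noteq> 0"
    using sum.not_neutral_contains_not_neutral by blast
  then show "p \<in> (\<Union>k<m. mat_support (B k))"
    using p B by (auto simp: mat_support_def)
next
  fix p assume "p \<in> (\<Union>k<m. mat_support (B k))"
  then obtain k where k: "k < m" "p \<in> mat_support (B k)" by blast
  obtain i j where p: "p = (i, j)" by fastforce
  have "i < n" "j < n" "B k $$ (i, j) \<noteq> 0"
    using k B[of k] by (auto simp: mat_support_def p)
  then show "p \<in> mat_support (mat_sum n B m)"
    using mat_sum_entry_single[of m B n, OF B disj] k(1) by (auto simp: mat_support_def p)
qed

lemma nnz_mat_sum:
  assumes B: "\<And>k. k < m \<Longrightarrow> B k \<in> carrier_mat n n"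
    and disj: "\<And>k l. k < m \<Longrightarrow> l < m \<Longrightarrow> k \<noteq> l \<Longrightarrow> mat_support (B k) \<inter> mat_support (B l) = {}"
  shows "nnz (mat_sum n B m) = (\<Sum>k<m. nnz (B k))"
proof -
  have "nnz (mat_sum n B m) = card (\<Union>k<m. mat_support (B k))"
    by (simp add: nnz_eq_card_mat_support mat_support_mat_sum[of m B n, OF B disj])
  also have "\<dots> = (\<Sum>k<m. card (mat_support (B k)))"
    by (rule card_UN_disjoint) (use disj in auto)
  finally show ?thesis by (simp add: nnz_eq_card_mat_support)
qed

lemma binary_mat_sum:
  assumes B: "\<And>k. k < m \<Longrightarrow> B k \<in> carrier_mat n n"
    and disj: "\<And>k l. k < m \<Longrightarrow> l < m \<Longrightarrow> k \<noteq> l \<Longrightarrow> mat_support (B k) \<inter> mat_support (B l) = {}"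
    and bin: "\<And>k. k < m \<Longrightarrow> binary_mat (B k)"
  shows "binary_mat (mat_sum n B m)"
  unfolding binary_mat_def
proof (intro allI impI)
  fix i j assume "i < dim_row (mat_sum n B m)" "j < dim_col (mat_sum n B m)"
  then have ij: "i < n" "j < n" by (auto simp: mat_sum_def)
  show "mat_sum n B m $$ (i, j) \<in> {0, 1}"
  proof (cases "\<exists>k<m. B k $$ (i, j) \<noteq> 0")
    case True
    then obtain k where "k < m" "B k $$ (i, j) \<noteq> 0" by blast
    then show ?thesis
      using mat_sum_entry_single[of m B n, OF B disj ij] bin[of k] B[of k] ij
      by (auto simp: binary_mat_def)
  next
    case False
    then show ?thesis using ij by (simp add: mat_sum_def)
  qed
qed

subsection \<open>Matrices of self-maps\<close>

definition fun_mat :: "nat \<Rightarrow> (nat \<Rightarrow> nat) \<Rightarrow> int mat" where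
  "fun_mat n g = mat n n (\<lambda>(i, j). if g (Suc j) = Suc i then 1 else 0)"

lemma fun_mat_carrier[simp]: "fun_mat n g \<in> carrier_mat n n"
  by (simp add: fun_mat_def)

lemma dim_fun_mat[simp]: "dim_row (fun_mat n g) = n" "dim_col (fun_mat n g) = n"
  by (simp_all add: fun_mat_def)

lemma index_fun_mat[simp]:
  "i < n \<Longrightarrow> j < n \<Longrightarrow> fun_mat n g $$ (i, j) = (if g (Suc j) = Suc i then 1 else 0)"
  by (simp add: fun_mat_def)

lemma fun_mat_id: "fun_mat n (\<lambda>x. x) = 1\<^sub>m n"
  by (auto simp: fun_mat_def)

lemma fun_mat_mult:
  assumes "g 0 = 0" and h: "\<And>x. x \<in> {1..n} \<Longrightarrow> h x \<le> n"
  shows "fun_mat n g * fun_mat n h = fun_mat n (g \<circ> h)"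
proof (rule eq_matI)
  fix i j assume "i < dim_row (fun_mat n (g \<circ> h))" "j < dim_col (fun_mat n (g \<circ> h))"
  then have ij: "i < n" "j < n" by (auto simp: fun_mat_def)
  have "(fun_mat n g * fun_mat n h) $$ (i, j)
      = (\<Sum>l<n. (if g (Suc l) = Suc i then 1 else 0) * (if h (Suc j) = Suc l then 1 else 0))"
    using ij by (simp add: scalar_prod_def fun_mat_def lessThan_atLeast0)
  also have "\<dots> = (if g (h (Suc j)) = Suc i then 1 else 0)"
  proof (cases "h (Suc j)")
    case 0
    then show ?thesis using \<open>g 0 = 0\<close> by simp
  next
    case (Suc l0)
    then have "l0 < n" using h[of "Suc j"] ij by simp
    with Suc show ?thesis by (simp add: sum_eq_single_nonzero[of _ l0])
  qed
  finally show "(fun_mat n g * fun_mat n h) $$ (i, j) = fun_mat n (g \<circ> h) $$ (i, j)"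
    using ij by simp
qed auto

lemma funpow_fixes_0: "(f :: 'a :: zero \<Rightarrow> 'a) 0 = 0 \<Longrightarrow> (f ^^ k) 0 = 0"
  by (induction k) auto

lemma fun_mat_pow:
  assumes "f 0 = 0" and "\<And>x. x \<in> {1..n} \<Longrightarrow> f x \<le> n"
  shows "fun_mat n f ^\<^sub>m k = fun_mat n (f ^^ k)"
proof (induction k)
  case 0
  show ?case by (simp add: fun_mat_id)
next
  case (Suc k)
  have "fun_mat n f ^\<^sub>m Suc k = fun_mat n (f ^^ k) * fun_mat n f" by (simp add: Suc.IH)
  also have "\<dots> = fun_mat n ((f ^^ k) \<circ> f)"
    using assms by (intro fun_mat_mult funpow_fixes_0)
  finally show ?case by (simp only: funpow_Suc_right)
qed

lemma mat_support_fun_mat: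
  "mat_support (fun_mat n g) = {(i, j). i < n \<and> j < n \<and> g (Suc j) = Suc i}"
  by (auto simp: mat_support_def split: if_splits)

lemma binary_fun_mat: "binary_mat (fun_mat n g)"
  by (simp add: binary_mat_def)

lemma nnz_fun_mat:
  assumes "\<And>x. x \<in> {1..n} \<Longrightarrow> g x \<le> n"
  shows "nnz (fun_mat n g) = card {x \<in> {1..n}. g x \<noteq> 0}"
proof -
  have "inj_on (\<lambda>(i, j). Suc j) (mat_support (fun_mat n g))"
    by (auto simp: inj_on_def mat_support_fun_mat)
  moreover have "(\<lambda>(i, j). Suc j) ` mat_support (fun_mat n g) = {x \<in> {1..n}. g x \<noteq> 0}"
  proof (intro equalityI subsetI)
    fix x assume "x \<in> {x \<in> {1..n}. g x \<noteq> 0}"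
    then have "(g x - 1, x - 1) \<in> mat_support (fun_mat n g)" "x = Suc (x - 1)"
      using assms[of x] by (auto simp: mat_support_fun_mat)
    then show "x \<in> (\<lambda>(i, j). Suc j) ` mat_support (fun_mat n g)" by force
  qed (auto simp: mat_support_fun_mat)
  ultimately show ?thesis
    by (metis (no_types, lifting) card_image nnz_eq_card_mat_support)
qed

lemma nnz_one_mat: "nnz (1\<^sub>m n) = n"
proof -
  have "nnz (fun_mat n (\<lambda>x. x)) = card {x \<in> {1..n}. x \<noteq> 0}" by (rule nnz_fun_mat) simp
  also have "{x \<in> {1..n}. x \<noteq> (0 :: nat)} = {1..n}" by auto
  finally show ?thesis by (simp add: fun_mat_id)
qed

lemma fun_mat_eq_0: "(\<And>x. x \<in> {1..n} \<Longrightarrow> g x = 0) \<Longrightarrow> fun_mat n g = 0\<^sub>m n n"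
  by (auto simp: fun_mat_def)

section \<open>Self-maps without periodic points\<close>

locale acyclic_self_map =
  fixes n :: nat and f :: "nat \<Rightarrow> nat"
  assumes map_0: "f 0 = 0"
    and map_le: "x \<le> n \<Longrightarrow> f x \<le> n"
    and no_periodic_point: "x \<in> {1..n} \<Longrightarrow> 0 < k \<Longrightarrow> (f ^^ k) x \<noteq> x"
begin

lemma funpow_at_0[simp]: "(f ^^ k) 0 = 0"
  by (induction k) (simp_all add: map_0)

lemma funpow_le: "x \<le> n \<Longrightarrow> (f ^^ k) x \<le> n"
  by (induction k) (auto intro: map_le)

lemma funpow_eq_0_mono: "(f ^^ k) x = 0 \<Longrightarrow> k \<le> l \<Longrightarrow> (f ^^ l) x = 0"
  by (simp add: funpow_diff_apply[of k l])

lemma funpow_inj: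
  assumes x: "x \<le> n" and eq: "(f ^^ k) x = (f ^^ l) x" and nz: "(f ^^ k) x \<noteq> 0"
  shows "k = l"
proof -
  have False if "a < b" "(f ^^ a) x = (f ^^ b) x" "(f ^^ a) x \<noteq> 0" for a b
  proof -
    have "(f ^^ (b - a)) ((f ^^ a) x) = (f ^^ a) x"
      using that funpow_diff_apply[of a b f x] by simp
    moreover have "(f ^^ a) x \<in> {1..n}" using funpow_le[OF x] that(3) by (auto simp: Suc_le_eq)
    ultimately show False using no_periodic_point \<open>a < b\<close> by simp
  qed
  then show ?thesis using eq nz by (metis linorder_neqE_nat)
qed

lemma funpow_n_eq_0:
  assumes x: "x \<le> n"
  shows "(f ^^ n) x = 0"
proof (rule ccontr)
  assume "(f ^^ n) x \<noteq> 0"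
  then have nz: "(f ^^ k) x \<noteq> 0" if "k \<le> n" for k
    using funpow_eq_0_mono[of k x n] that by metis
  have "inj_on (\<lambda>k. (f ^^ k) x) {0..n}"
    using funpow_inj[OF x] nz by (auto simp: inj_on_def)
  moreover have "(\<lambda>k. (f ^^ k) x) ` {0..n} \<subseteq> {1..n}"
    using nz funpow_le[OF x] by (auto simp: Suc_le_eq)
  ultimately have "card {0..n} \<le> card {1..n}" by (rule card_inj_on_le) simp
  then show False by simp
qed

lemma funpow_nonzero_Suc_subset:
  "{x \<in> {1..n}. (f ^^ Suc k) x \<noteq> 0} \<subseteq> {x \<in> {1..n}. (f ^^ k) x \<noteq> 0}"
proof
  fix x assume "x \<in> {x \<in> {1..n}. (f ^^ Suc k) x \<noteq> 0}"
  then show "x \<in> {x \<in> {1..n}. (f ^^ k) x \<noteq> 0}"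
    using funpow_eq_0_mono[of k x "Suc k"] by (auto simp del: funpow.simps)
qed

lemma card_funpow_nonzero_Suc_less:
  assumes "{x \<in> {1..n}. (f ^^ k) x \<noteq> 0} \<noteq> {}"
  shows "card {x \<in> {1..n}. (f ^^ Suc k) x \<noteq> 0} < card {x \<in> {1..n}. (f ^^ k) x \<noteq> 0}"
proof -
  obtain x where x: "x \<in> {1..n}" "(f ^^ k) x \<noteq> 0" using assms by auto
  then have "k \<le> n" using funpow_eq_0_mono[OF funpow_n_eq_0] by (meson atLeastAtMost_iff nat_le_linear)
  then obtain m where m: "k \<le> m" "(f ^^ m) x \<noteq> 0" "(f ^^ Suc m) x = 0"
    using last_before_change[of "\<lambda>m. (f ^^ m) x \<noteq> 0" k n] x funpow_n_eq_0[of x] by auto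
  \<comment> \<open>The point \<open>k\<close> steps before the last nonzero point of the orbit of \<open>x\<close>
    survives \<open>k\<close> steps of \<open>f\<close> but not \<open>k + 1\<close>.\<close>
  define z where "z = (f ^^ (m - k)) x"
  have "(f ^^ k) z = (f ^^ m) x" "(f ^^ Suc k) z = (f ^^ Suc m) x"
    unfolding z_def using m(1) funpow_diff_apply[of "m - k" m f x] funpow_diff_apply[of "m - k" "Suc m" f x]
    by (simp_all add: Suc_diff_le)
  moreover have "z \<le> n" unfolding z_def using x by (simp add: funpow_le)
  moreover have "z \<noteq> 0" using calculation(1) m(2) by (metis funpow_at_0)
  ultimately have "z \<in> {x \<in> {1..n}. (f ^^ k) x \<noteq> 0}" "z \<notin> {x \<in> {1..n}. (f ^^ Suc k) x \<noteq> 0}"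
    using m by (simp_all del: funpow.simps)
  then have "{x \<in> {1..n}. (f ^^ Suc k) x \<noteq> 0} \<subset> {x \<in> {1..n}. (f ^^ k) x \<noteq> 0}"
    using funpow_nonzero_Suc_subset by blast
  then show ?thesis by (rule psubset_card_mono[rotated]) simp
qed

lemma card_funpow_nonzero: "card {x \<in> {1..n}. (f ^^ k) x \<noteq> 0} \<le> n - k"
proof (induction k)
  case 0
  have "card {x \<in> {1..n}. (f ^^ 0) x \<noteq> 0} \<le> card {1..n}" by (intro card_mono) auto
  then show ?case by simp
next
  case (Suc k)
  show ?case
  proof (cases "{x \<in> {1..n}. (f ^^ k) x \<noteq> 0} = {}")
    case True
    then have "{x \<in> {1..n}. (f ^^ Suc k) x \<noteq> 0} = {}"
      using funpow_nonzero_Suc_subset[of k] by blast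
    then show ?thesis by (simp only: card.empty)
  next
    case False
    then show ?thesis using card_funpow_nonzero_Suc_less[OF False] Suc.IH by linarith
  qed
qed

lemma perm_not_inverse_on_moved_points:
  assumes p: "p permutes {0..<n}" and "p \<noteq> id"
  shows "\<exists>i<n. p i \<noteq> i \<and> f (Suc (p i)) \<noteq> Suc i"
proof (rule ccontr)
  assume "\<not> ?thesis"
  then have inv: "f (Suc (p i)) = Suc i" if "i < n" "p i \<noteq> i" for i
    using that by blast
  obtain i0 where i0: "p i0 \<noteq> i0" using \<open>p \<noteq> id\<close> by (auto simp: fun_eq_iff)
  then have "i0 < n" using permutes_not_in[OF p] by auto
  have orbit: "(p ^^ m) i0 < n \<and> p ((p ^^ m) i0) \<noteq> (p ^^ m) i0 \<and> (f ^^ m) (Suc ((p ^^ m) i0)) = Suc i0"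
    for m
  proof (induction m)
    case 0
    show ?case using i0 \<open>i0 < n\<close> by simp
  next
    case (Suc m)
    let ?y = "(p ^^ m) i0"
    have "p ?y < n" using permutes_in_image[OF p] Suc.IH by auto
    moreover have "p (p ?y) \<noteq> p ?y" using Suc.IH permutes_inj[OF p] by (metis injD)
    moreover have "(f ^^ Suc m) (Suc (p ?y)) = Suc i0"
      using inv Suc.IH by (simp add: funpow_Suc_right del: funpow.simps)
    ultimately show ?case by simp
  qed
  have "Suc ((p ^^ n) i0) \<le> n" using orbit[of n] by simp
  from funpow_n_eq_0[OF this] orbit[of n] show False by simp
qed

lemma det_one_minus_fun_mat: "det (1\<^sub>m n - fun_mat n f) = 1"
proof -
  let ?A = "1\<^sub>m n - fun_mat n f"
  have entry: "?A $$ (i, j) = (if i = j then 1 else 0) - (if f (Suc j) = Suc i then 1 else 0)"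
    if "i < n" "j < n" for i j
    using that by simp
  have "det ?A = (\<Prod>i=0..<n. ?A $$ (i, i))"
  proof (rule det_eq_diag_prod)
    show "?A \<in> carrier_mat n n" by (simp add: minus_carrier_mat)
  next
    fix p assume p: "p permutes {0..<n}" "p \<noteq> id"
    then obtain i where i: "i < n" "p i \<noteq> i" "f (Suc (p i)) \<noteq> Suc i"
      using perm_not_inverse_on_moved_points by blast
    then have "?A $$ (i, p i) = 0" using entry permutes_in_image[OF p(1)] by auto
    then show "(\<Prod>i=0..<n. ?A $$ (i, p i)) = 0" using i(1) by (intro prod_zero) auto
  qed
  also have "\<dots> = 1"
    using no_periodic_point[of _ 1] by (intro prod.neutral) (auto simp: entry)
  finally show ?thesis .
qed

lemma pow_fun_mat: "fun_mat n f ^\<^sub>m k = fun_mat n (f ^^ k)"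
  using map_0 map_le by (intro fun_mat_pow) auto

lemma fun_mat_nilpotent: "fun_mat n f ^\<^sub>m n = 0\<^sub>m n n"
  unfolding pow_fun_mat using funpow_n_eq_0 by (intro fun_mat_eq_0) auto

lemma nnz_pow_fun_mat_le: "nnz (fun_mat n f ^\<^sub>m k) \<le> n - k"
  unfolding pow_fun_mat using funpow_le card_funpow_nonzero
  by (subst nnz_fun_mat) auto

lemma binary_pow_fun_mat: "binary_mat (fun_mat n f ^\<^sub>m k)"
  unfolding pow_fun_mat by (rule binary_fun_mat)

lemma mat_support_pow_fun_mat_disjoint:
  assumes "k \<noteq> l"
  shows "mat_support (fun_mat n f ^\<^sub>m k) \<inter> mat_support (fun_mat n f ^\<^sub>m l) = {}"
proof (rule equals0I)
  fix p assume "p \<in> mat_support (fun_mat n f ^\<^sub>m k) \<inter> mat_support (fun_mat n f ^\<^sub>m l)"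
  then obtain i j where "j < n" "(f ^^ k) (Suc j) = Suc i" "(f ^^ l) (Suc j) = Suc i"
    by (auto simp: pow_fun_mat mat_support_fun_mat)
  then have "k = l" using funpow_inj[of "Suc j" k l] by simp
  with assms show False ..
qed

lemma inverts_one_minus_fun_mat:
  "inverts_mat (1\<^sub>m n - fun_mat n f) (mat_sum n (\<lambda>k. fun_mat n f ^\<^sub>m k) n)"
  "inverts_mat (mat_sum n (\<lambda>k. fun_mat n f ^\<^sub>m k) n) (1\<^sub>m n - fun_mat n f)"
  using geometric_mat_sum_left[OF fun_mat_carrier, of n f n]
    geometric_mat_sum_right[OF fun_mat_carrier, of n f n]
  by (auto simp: inverts_mat_def fun_mat_nilpotent)

lemma binary_mat_sum_pow_fun_mat: "binary_mat (mat_sum n (\<lambda>k. fun_mat n f ^\<^sub>m k) m)"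
  using mat_support_pow_fun_mat_disjoint
  by (intro binary_mat_sum) (auto simp: binary_pow_fun_mat)

lemma nnz_mat_sum_pow_fun_mat:
  "nnz (mat_sum n (\<lambda>k. fun_mat n f ^\<^sub>m k) m) = (\<Sum>k<m. nnz (fun_mat n f ^\<^sub>m k))"
  using mat_support_pow_fun_mat_disjoint by (intro nnz_mat_sum) auto

lemma nnz_mat_sum_pow_fun_mat_le: "nnz (mat_sum n (\<lambda>k. fun_mat n f ^\<^sub>m k) n) \<le> Suc n choose 2"
proof -
  have "(\<Sum>k<n. nnz (fun_mat n f ^\<^sub>m k)) \<le> (\<Sum>k<n. n - k)"
    by (intro sum_mono nnz_pow_fun_mat_le)
  then show ?thesis by (simp add: nnz_mat_sum_pow_fun_mat sum_diff_lessThan_eq_choose_2)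
qed

end

lemma acyclic_self_map_loc_fun:
  assumes "\<And>x. x \<ge> 1 \<Longrightarrow> \<phi> x \<noteq> x" and "no_cycle n \<phi>"
  shows "acyclic_self_map n (loc_fun n \<phi>)"
proof
  show "loc_fun n \<phi> 0 = 0" "loc_fun n \<phi> x \<le> n" for x
    by (simp_all add: loc_fun_def)
  fix x k :: nat assume x: "x \<in> {1..n}" and "0 < k"
  show "(loc_fun n \<phi> ^^ k) x \<noteq> x"
  proof (cases "k = 1")
    case True
    then show ?thesis using assms(1)[of x] x by (auto simp: loc_fun_def)
  next
    case False
    then show ?thesis using assms(2) \<open>0 < k\<close> x unfolding no_cycle_def by auto
  qed
qed

lemma M_mat_eq_fun_mat: "M_mat n \<phi> = fun_mat n (loc_fun n \<phi>)"
  by (simp add: M_mat_def fun_mat_def)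

theorem theorem1p5:
  fixes \<phi> :: "nat \<Rightarrow> nat" and n :: nat
  assumes "\<phi> 0 = 0"
    and "\<And>x. x \<ge> 1 \<Longrightarrow> \<phi> x \<noteq> x"
    and "n \<ge> 2"
    and "no_cycle n \<phi>"
  shows "(\<exists>k \<le> n. k \<ge> 1 \<and> nilpotent_of_degree (M_mat n \<phi>) k)
    \<and> (\<forall>k \<ge> 1. binary_mat (M_mat n \<phi> ^\<^sub>m k))
    \<and> (\<forall>k. 1 \<le> k \<and> k \<le> n \<longrightarrow> nnz (M_mat n \<phi> ^\<^sub>m k) \<le> n - k)
    \<and> (\<forall>k l. k \<ge> 1 \<and> l \<ge> 1 \<and> k \<noteq> l \<longrightarrow>
          mat_meet (M_mat n \<phi> ^\<^sub>m k) (M_mat n \<phi> ^\<^sub>m l) = 0)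
    \<and> invertible_mat (Mhat_mat n \<phi>) \<and> det (Mhat_mat n \<phi>) = 1
    \<and> (let Minv = mat_sum n (\<lambda>k. M_mat n \<phi> ^\<^sub>m k) n in
         inverts_mat (Mhat_mat n \<phi>) Minv \<and> inverts_mat Minv (Mhat_mat n \<phi>)
         \<and> binary_mat Minv
         \<and> nnz Minv = n + (\<Sum>k=1..n-1. nnz (M_mat n \<phi> ^\<^sub>m k))
         \<and> nnz Minv \<le> (n + 1) choose 2)"
proof -
  interpret acyclic_self_map n "loc_fun n \<phi>"
    using assms(2,4) by (rule acyclic_self_map_loc_fun)
  let ?M = "fun_mat n (loc_fun n \<phi>)"
  have "0 < n" using assms(3) by simp
  have nilpotent: "\<exists>k \<le> n. k \<ge> 1 \<and> nilpotent_of_degree ?M k"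
    using fun_mat_nilpotent \<open>0 < n\<close> by (intro nilpotent_of_degree_exists) auto
  have meet: "mat_meet (?M ^\<^sub>m k) (?M ^\<^sub>m l) = 0" if "k \<noteq> l" for k l
    using mat_support_pow_fun_mat_disjoint[OF that] by (simp add: mat_meet_eq_card_Int)
  have invertible: "invertible_mat (1\<^sub>m n - ?M)"
    using inverts_one_minus_fun_mat unfolding invertible_mat_def by (auto simp: minus_carrier_mat)
  have "nnz (mat_sum n (\<lambda>k. ?M ^\<^sub>m k) n) = (\<Sum>k<n. nnz (?M ^\<^sub>m k))"
    by (rule nnz_mat_sum_pow_fun_mat)
  also have "\<dots> = nnz (?M ^\<^sub>m 0) + (\<Sum>k=1..n-1. nnz (?M ^\<^sub>m k))"
    using \<open>0 < n\<close> by (rule sum_lessThan_split_first)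
  also have "nnz (?M ^\<^sub>m 0) = n" by (simp add: nnz_one_mat)
  finally show ?thesis
    unfolding Let_def Mhat_mat_def M_mat_eq_fun_mat
    using nilpotent meet invertible det_one_minus_fun_mat inverts_one_minus_fun_mat
      binary_mat_sum_pow_fun_mat nnz_mat_sum_pow_fun_mat_le
    by (auto simp: binary_pow_fun_mat nnz_pow_fun_mat_le)
qed

end
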